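(* Fix reals $a<b$, $S=T\cap[a,b]$, a natural number $m\ge1$, points $q_1,\ldots,q_r\in\mathbf M$, and $-\infty\le\alpha_i\le\beta_i\le\infty$ ($i=1,\ldots,r$). Let $\Pi_1=\{x\in\mathbf M:\alpha_i\le\tau(x,q_i)\le\beta_i,\ i=1,\ldots,r\}$ and let $\mathbf\Pi\subseteq\Pi_1$. Fix $\ell$ and $a=u_1<\cdots<u_{\ell+1}=b$, and let $\mathcal A$ be a set of constraints satisfied by $(|C|,(x_i^{(k)}(C)))$ for every $S$-code $C\subset\mathbf\Pi$. Let $c^*(m)$ be the supremum of $c$ over real variables $c$, $(x_i^{(k)})_{1\le i\le\ell,0\le k\le 2m-1}$, $(y_i^{(k)})_{1\le i\le r,0\le k\le 2m-1}$ with $y_1^{(0)}=\cdots=y_r^{(0)}=c$, subject to: (7) $H_m(x_i^{(0)},\ldots,x_i^{(2m-1)},[u_i,u_{i+1}])\succeq0$, $i=1,\ldots,\ell$; (8) the constraints $\mathcal A$; (9) for $k=0,\ldots,2m-1$ the $(r+1)\times(r+1)$ symmetric matrix $G_k$ with entries $(G_k)_{ij}=\Phi_k(\tau(q_i,q_j))$ for $i,j\le r$, $(G_k)_{i,r+1}=(G_k)_{r+1,i}=\sum_{d=0}^k p_{kd}y_i^{(d)}$ for $i\le r$, and $(G_k)_{r+1,r+1}=c+\sum_{d=0}^k p_{kd}\sum_{i=1}^\ell x_i^{(d)}$, is positive semidefinite; (10) $H_m(y_i^{(0)},\ldots,y_i^{(2m-1)},[\alpha_i,\beta_i])\succeq0$,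 $i=1,\ldots,r$ (with the block $F_m^+(\alpha_i)$ omitted if $\alpha_i=-\infty$ and $F_m^-(\beta_i)$ omitted if $\beta_i=\infty$). Then $A(\mathbf\Pi,S)\le c^*(m)$.
   Context: $\mathbf M$ is a 2-point-homogeneous space with associated real function $\tau(x,y)$, $\tau_0:=\tau(x,x)$, $T=\{\tau(x,y):x,y\in\mathbf M\}$, and zonal spherical functions $\Phi_k(t)=\sum_{d=0}^k p_{kd}t^d$ assumed to be real polynomials of degree $k$ with $\Phi_k(\tau_0)=1$ such that for every finite $\{x_1,\ldots,x_N\}\subset\mathbf M$ and $k\ge0$ the matrix $(\Phi_k(\tau(x_i,x_j)))$ is positive semidefinite. An $S$-code is a finite $C\subset\mathbf M$ with $\tau(x,y)\in S$ for all distinct $x,y\in C$; $A(\mathbf\Pi,S)$ is the largest cardinality of an $S$-code contained in $\mathbf\Pi$. For an $S$-code $C=\{z_1,\ldots,z_c\}$, $x_i^{(k)}(C):=\sum\tau(z_p,z_q)^k$ over ordered pairs $p\ne q$ with $\tau(z_p,z_q)\in[u_i,u_{i+1})$ ($i<\ell$), resp. $\in[u_\ell,b]$ ($i=\ell$); $\tau^0:=1$. For reals $s_0,\ldots,s_{2m-1}$ and $\alpha<\beta$: $R_m=(s_{i+j-2})_{i,j=1}^m$, $F_m^+(\alpha)=(s_{i+j-1}-\alpha s_{i+j-2})$, $F_m^-(\beta)=(\beta s_{i+j-2}-s_{i+j-1})$, $H_m(s_0,\ldots,s_{2m-1},[\alpha,\beta])=\operatorname{diag}(R_m,F_m^+(\alpha),F_m^-(\beta))$.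 *)

theory Defs
  imports Complex_Main "HOL-Library.Extended_Real"
begin

definition psd :: "nat \<Rightarrow> (nat \<Rightarrow> nat \<Rightarrow> real) \<Rightarrow> bool" where
  "psd n A \<longleftrightarrow> (\<forall>i<n. \<forall>j<n. A i j = A j i) \<and>
                 (\<forall>v::nat \<Rightarrow> real. 0 \<le> (\<Sum>i<n. \<Sum>j<n. v i * A i j * v j))"

definition block_diag :: "nat \<Rightarrow> (nat \<Rightarrow> nat \<Rightarrow> real) list \<Rightarrow> nat \<Rightarrow> nat \<Rightarrow> real" where
  "block_diag m L = (\<lambda>i j. if i div m = j div m then (L ! (i div m)) (i mod m) (j mod m) else 0)"

text \<open>Hankel blocks, 0-indexed (entry (i,j) here is entry (i+1,j+1) of the paper).\<close>
definition R_mat :: "(nat \<Rightarrow> real) \<Rightarrow> nat \<Rightarrow> nat \<Rightarrow> real" where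
  "R_mat s = (\<lambda>i j. s (i + j))"
definition Fplus :: "(nat \<Rightarrow> real) \<Rightarrow> real \<Rightarrow> nat \<Rightarrow> nat \<Rightarrow> real" where
  "Fplus s \<alpha> = (\<lambda>i j. s (i + j + 1) - \<alpha> * s (i + j))"
definition Fminus :: "(nat \<Rightarrow> real) \<Rightarrow> real \<Rightarrow> nat \<Rightarrow> nat \<Rightarrow> real" where
  "Fminus s \<beta> = (\<lambda>i j. \<beta> * s (i + j) - s (i + j + 1))"

definition H_blocks :: "(nat \<Rightarrow> real) \<Rightarrow> ereal \<Rightarrow> ereal \<Rightarrow> (nat \<Rightarrow> nat \<Rightarrow> real) list" where
  "H_blocks s \<alpha> \<beta> = [R_mat s]
      @ (if \<alpha> = -\<infinity> then [] else [Fplus s (real_of_ereal \<alpha>)])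
      @ (if \<beta> = \<infinity> then [] else [Fminus s (real_of_ereal \<beta>)])"

definition H_psd :: "nat \<Rightarrow> (nat \<Rightarrow> real) \<Rightarrow> ereal \<Rightarrow> ereal \<Rightarrow> bool" where
  "H_psd m s \<alpha> \<beta> = psd (m * length (H_blocks s \<alpha> \<beta>)) (block_diag m (H_blocks s \<alpha> \<beta>))"

definition Phi :: "(nat \<Rightarrow> nat \<Rightarrow> real) \<Rightarrow> nat \<Rightarrow> real \<Rightarrow> real" where
  "Phi p k t = (\<Sum>d\<le>k. p k d * t ^ d)"

definition S_code :: "('a \<Rightarrow> 'a \<Rightarrow> real) \<Rightarrow> real set \<Rightarrow> 'a set \<Rightarrow> bool" where
  "S_code \<tau> S C \<longleftrightarrow> finite C \<and> (\<forall>x\<in>C. \<forall>y\<in>C. x \<noteq> y \<longrightarrow> \<tau> x y \<in> S)"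

definition A_max :: "('a \<Rightarrow> 'a \<Rightarrow> real) \<Rightarrow> 'a set \<Rightarrow> real set \<Rightarrow> ereal" where
  "A_max \<tau> \<Pi> S = Sup {ereal (real (card C)) | C. S_code \<tau> S C \<and> C \<subseteq> \<Pi>}"

definition xcode :: "('a \<Rightarrow> 'a \<Rightarrow> real) \<Rightarrow> (nat \<Rightarrow> real) \<Rightarrow> nat \<Rightarrow> real \<Rightarrow> 'a set \<Rightarrow> nat \<Rightarrow> nat \<Rightarrow> real" where
  "xcode \<tau> u l b C i k =
     (\<Sum>zw \<in> {(z, w). z \<in> C \<and> w \<in> C \<and> z \<noteq> w \<and>
                 (if i < l then u i \<le> \<tau> z w \<and> \<tau> z w < u (i + 1)
                  else u l \<le> \<tau> z w \<and> \<tau> z w \<le> b)}.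
        (\<tau> (fst zw) (snd zw)) ^ k)"

text \<open>Restriction of a variable family to indices 1..l, 0..2m-1 (the variables the
  constraint set A speaks about).\<close>
definition restr :: "nat \<Rightarrow> nat \<Rightarrow> (nat \<Rightarrow> nat \<Rightarrow> real) \<Rightarrow> nat \<Rightarrow> nat \<Rightarrow> real" where
  "restr l m x = (\<lambda>i k. if 1 \<le> i \<and> i \<le> l \<and> k < 2 * m then x i k else 0)"

text \<open>The matrix G_k (0-indexed, size r+1); q, y indexed from 1.\<close>
definition G_mat :: "('a \<Rightarrow> 'a \<Rightarrow> real) \<Rightarrow> (nat \<Rightarrow> nat \<Rightarrow> real) \<Rightarrow> nat \<Rightarrow> (nat \<Rightarrow> 'a) \<Rightarrow> nat
    \<Rightarrow> real \<Rightarrow> (nat \<Rightarrow> nat \<Rightarrow> real) \<Rightarrow> (nat \<Rightarrow> nat \<Rightarrow> real) \<Rightarrow> nat \<Rightarrow> nat \<Rightarrow> nat \<Rightarrow> real" where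
  "G_mat \<tau> p r q l c x y k = (\<lambda>i j.
     if i < r \<and> j < r then Phi p k (\<tau> (q (Suc i)) (q (Suc j)))
     else if i < r then (\<Sum>d\<le>k. p k d * y (Suc i) d)
     else if j < r then (\<Sum>d\<le>k. p k d * y (Suc j) d)
     else c + (\<Sum>d\<le>k. p k d * (\<Sum>i'=1..l. x i' d)))"

definition feasible :: "('a \<Rightarrow> 'a \<Rightarrow> real) \<Rightarrow> (nat \<Rightarrow> nat \<Rightarrow> real) \<Rightarrow> nat \<Rightarrow> (nat \<Rightarrow> 'a)
    \<Rightarrow> (nat \<Rightarrow> ereal) \<Rightarrow> (nat \<Rightarrow> ereal) \<Rightarrow> nat \<Rightarrow> (nat \<Rightarrow> real)
    \<Rightarrow> (real \<Rightarrow> (nat \<Rightarrow> nat \<Rightarrow> real) \<Rightarrow> bool) \<Rightarrow> nat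
    \<Rightarrow> real \<Rightarrow> (nat \<Rightarrow> nat \<Rightarrow> real) \<Rightarrow> (nat \<Rightarrow> nat \<Rightarrow> real) \<Rightarrow> bool" where
  "feasible \<tau> p r q \<alpha> \<beta> l u Acon m c x y \<longleftrightarrow>
     (\<forall>i\<in>{1..r}. y i 0 = c) \<and>
     (\<forall>i\<in>{1..l}. H_psd m (x i) (ereal (u i)) (ereal (u (i + 1)))) \<and>
     Acon c (restr l m x) \<and>
     (\<forall>k<2 * m. psd (r + 1) (G_mat \<tau> p r q l c x y k)) \<and>
     (\<forall>i\<in>{1..r}. H_psd m (y i) (\<alpha> i) (\<beta> i))"

definition c_star :: "('a \<Rightarrow> 'a \<Rightarrow> real) \<Rightarrow> (nat \<Rightarrow> nat \<Rightarrow> real) \<Rightarrow> nat \<Rightarrow> (nat \<Rightarrow> 'a)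
    \<Rightarrow> (nat \<Rightarrow> ereal) \<Rightarrow> (nat \<Rightarrow> ereal) \<Rightarrow> nat \<Rightarrow> (nat \<Rightarrow> real)
    \<Rightarrow> (real \<Rightarrow> (nat \<Rightarrow> nat \<Rightarrow> real) \<Rightarrow> bool) \<Rightarrow> nat \<Rightarrow> ereal" where
  "c_star \<tau> p r q \<alpha> \<beta> l u Acon m =
     Sup {ereal c | c. \<exists>x y. feasible \<tau> p r q \<alpha> \<beta> l u Acon m c x y}"

end

theory Submission
  imports Defs
begin

(* Every S-code C in Pi yields a feasible point with c = |C|, x_i^(k) = x_i^(k)(C) and
   y_i^(k) = sum_{z in C} tau(z, q_i)^k.  The H_m blocks are moment matrices of point masses
   lying in [u_i, u_{i+1}] resp. [alpha_i, beta_i]: their quadratic forms are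
   sum_t w_t (t - alpha) (sum_j v_j t^j)^2 and the like.  The quadratic form of G_k is the
   Gram form of the positive definite kernel Phi_k(tau(., .)) on q_1, ..., q_r and the points
   of C, all points of C carrying the last weight; for its corner entry the diagonal pairs
   contribute Phi_k(tau_0) = 1 each, and the bins [u_i, u_{i+1}) partition the remaining
   pairs.  Hence |C| <= c^*(m). *)

lemma psd_moment_matrix:
  fixes f g :: "'e \<Rightarrow> real"
  assumes "\<And>e. e \<in> E \<Longrightarrow> 0 \<le> g e"
  shows "psd n (\<lambda>i j. \<Sum>e\<in>E. g e * f e ^ (i + j))"
  unfolding psd_def
proof (intro conjI allI impI)
  fix v :: "nat \<Rightarrow> real"
  have "(\<Sum>i<n. \<Sum>j<n. v i * (\<Sum>e\<in>E. g e * f e ^ (i + j)) * v j)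
      = (\<Sum>e\<in>E. g e * (\<Sum>i<n. v i * f e ^ i)\<^sup>2)"
    by (simp add: power2_eq_square sum_product sum_distrib_left sum_distrib_right power_add
        mult_ac sum.swap[of _ E])
  also have "\<dots> \<ge> 0"
    using assms by (intro sum_nonneg mult_nonneg_nonneg) auto
  finally show "0 \<le> (\<Sum>i<n. \<Sum>j<n. v i * (\<Sum>e\<in>E. g e * f e ^ (i + j)) * v j)" .
qed (simp add: add.commute)

lemma sum_lessThan_mult_blocks:
  fixes h :: "nat \<Rightarrow> 'b::comm_monoid_add"
  shows "(\<Sum>i<n * m. h i) = (\<Sum>c<n. \<Sum>i<m. h (c * m + i))"
proof -
  have "sum h {c * m..<c * m + m} = (\<Sum>i<m. h (c * m + i))" for c
    using sum.shift_bounds_nat_ivl[of h 0 "c * m" m] by (simp add: add.commute atLeast0LessThan)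
  then show ?thesis
    using sum.nat_group[of h m n] by simp
qed

lemma psd_block_diag:
  assumes psd_blocks: "\<And>B. B \<in> set L \<Longrightarrow> psd m B"
  shows "psd (m * length L) (block_diag m L)"
proof (cases "m = 0")
  case True
  then show ?thesis by (simp add: psd_def)
next
  case False
  let ?n = "length L"
  have entry: "block_diag m L (c * m + i) (c' * m + j) = (if c = c' then (L ! c) i j else 0)"
    if "i < m" "j < m" for c c' i j
    using that by (simp add: block_diag_def)
  show ?thesis
    unfolding psd_def
  proof (intro conjI allI impI)
    fix i j assume "i < m * ?n" "j < m * ?n"
    with False have "i div m < ?n"
      by (simp add: div_less_iff_less_mult mult.commute)
    then have "psd m (L ! (i div m))"
      using psd_blocks by simp
    then show "block_diag m L i j = block_diag m L j i"
      using False unfolding block_diag_def psd_def by simp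
  next
    fix v :: "nat \<Rightarrow> real"
    have "(\<Sum>i<m * ?n. \<Sum>j<m * ?n. v i * block_diag m L i j * v j)
       = (\<Sum>c<?n. \<Sum>i<m. \<Sum>c'<?n. \<Sum>j<m.
            v (c * m + i) * block_diag m L (c * m + i) (c' * m + j) * v (c' * m + j))"
      by (simp add: sum_lessThan_mult_blocks mult.commute[of m])
    also have "\<dots> = (\<Sum>c<?n. \<Sum>i<m. \<Sum>c'<?n. \<Sum>j<m.
        if c = c' then v (c * m + i) * (L ! c) i j * v (c * m + j) else 0)"
      by (intro sum.cong refl) (simp add: entry)
    also have "\<dots> = (\<Sum>c<?n. \<Sum>i<m. \<Sum>j<m. v (c * m + i) * (L ! c) i j * v (c * m + j))"
      by (subst sum.swap) (simp add: sum.delta)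
    also have "\<dots> \<ge> 0"
    proof (rule sum_nonneg)
      fix c assume "c \<in> {..<?n}"
      then have "psd m (L ! c)"
        using psd_blocks by simp
      then show "0 \<le> (\<Sum>i<m. \<Sum>j<m. v (c * m + i) * (L ! c) i j * v (c * m + j))"
        unfolding psd_def by (auto elim: allE[where x = "\<lambda>i. v (c * m + i)"])
    qed
    finally show "0 \<le> (\<Sum>i<m * ?n. \<Sum>j<m * ?n. v i * block_diag m L i j * v j)" .
  qed
qed

lemma H_psd_moments:
  fixes f :: "'e \<Rightarrow> real"
  assumes lower: "\<And>e. e \<in> E \<Longrightarrow> \<alpha> \<le> ereal (f e)"
    and upper: "\<And>e. e \<in> E \<Longrightarrow> ereal (f e) \<le> \<beta>"
  shows "H_psd m (\<lambda>k. \<Sum>e\<in>E. f e ^ k) \<alpha> \<beta>"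
  unfolding H_psd_def
proof (rule psd_block_diag)
  let ?s = "\<lambda>k. \<Sum>e\<in>E. f e ^ k"
  have "psd m (R_mat ?s)"
    using psd_moment_matrix[of E "\<lambda>_. 1" m f] by (simp add: R_mat_def)
  moreover have "psd m (Fplus ?s (real_of_ereal \<alpha>))" if "\<alpha> \<noteq> -\<infinity>"
  proof -
    have "real_of_ereal \<alpha> \<le> f e" if "e \<in> E" for e
      using lower[OF that] \<open>\<alpha> \<noteq> -\<infinity>\<close> by (cases \<alpha>) auto
    then show ?thesis
      using psd_moment_matrix[of E "\<lambda>e. f e - real_of_ereal \<alpha>" m f]
      by (simp add: Fplus_def sum_distrib_left sum_subtractf[symmetric] algebra_simps)
  qed
  moreover have "psd m (Fminus ?s (real_of_ereal \<beta>))" if "\<beta> \<noteq> \<infinity>"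
  proof -
    have "f e \<le> real_of_ereal \<beta>" if "e \<in> E" for e
      using upper[OF that] \<open>\<beta> \<noteq> \<infinity>\<close> by (cases \<beta>) auto
    then show ?thesis
      using psd_moment_matrix[of E "\<lambda>e. real_of_ereal \<beta> - f e" m f]
      by (simp add: Fminus_def sum_distrib_left sum_subtractf[symmetric] algebra_simps)
  qed
  ultimately show "psd m B" if "B \<in> set (H_blocks ?s \<alpha> \<beta>)" for B
    using that by (auto simp: H_blocks_def split: if_splits)
qed

definition off_diag :: "'a set \<Rightarrow> ('a \<times> 'a) set" where
  "off_diag C = {(z, w). z \<in> C \<and> w \<in> C \<and> z \<noteq> w}"

lemma off_diag_eq_Sigma: "off_diag C = Sigma C (\<lambda>z. C - {z})"
  by (auto simp: off_diag_def)

definition in_bin :: "(nat \<Rightarrow> real) \<Rightarrow> nat \<Rightarrow> real \<Rightarrow> nat \<Rightarrow> real \<Rightarrow> bool" where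
  "in_bin u l b i t \<longleftrightarrow> (if i < l then u i \<le> t \<and> t < u (i + 1) else u l \<le> t \<and> t \<le> b)"

lemma xcode_eq_sum_off_diag:
  assumes "finite C"
  shows "xcode \<tau> u l b C i k
    = (\<Sum>(z, w)\<in>off_diag C. if in_bin u l b i (\<tau> z w) then \<tau> z w ^ k else 0)"
proof -
  have "finite (off_diag C)"
    using assms by (simp add: off_diag_eq_Sigma)
  then show ?thesis
    unfolding xcode_def in_bin_def off_diag_def
    by (simp add: sum.inter_filter[symmetric] case_prod_beta' Collect_case_prod_Sigma)
qed

lemma H_psd_xcode:
  assumes "i \<in> {1..l}" and "u (l + 1) = b"
  shows "H_psd m (xcode \<tau> u l b C i) (ereal (u i)) (ereal (u (i + 1)))"
proof -
  have "xcode \<tau> u l b C i = (\<lambda>k. \<Sum>zw\<in>{(z, w). z \<in> C \<and> w \<in> C \<and> z \<noteq> w \<and> in_bin u l b i (\<tau> z w)}.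
      \<tau> (fst zw) (snd zw) ^ k)"
    by (simp add: fun_eq_iff xcode_def in_bin_def)
  then show ?thesis
    using assms by (auto intro!: H_psd_moments simp: in_bin_def split: if_splits)
qed

lemma ex1_in_bin:
  assumes l: "1 \<le> l" and mono: "mono_on {1..l} u" and t: "u 1 \<le> t" "t \<le> b"
  shows "\<exists>!i. i \<in> {1..l} \<and> in_bin u l b i t"
proof -
  have separated: "\<not> (in_bin u l b i t \<and> in_bin u l b j t)"
    if "i \<in> {1..l}" "j \<in> {1..l}" "i < j" for i j
  proof -
    have "u (i + 1) \<le> u j"
      using that by (intro mono_onD[OF mono]) auto
    then show ?thesis
      using that by (auto simp: in_bin_def split: if_splits)
  qed
  obtain i where i: "i \<in> {1..l}" "in_bin u l b i t"
  proof (cases "u l \<le> t")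
    case True
    with l t show ?thesis
      by (intro that[of l]) (auto simp: in_bin_def)
  next
    case False
    define K where "K = {i \<in> {1..l}. u i \<le> t}"
    have "finite K" "1 \<in> K"
      using l t by (auto simp: K_def)
    then have "Max K \<in> K"
      using Max_in by blast
    moreover have "Max K < l"
      using \<open>Max K \<in> K\<close> False by (auto simp: K_def order.order_iff_strict)
    moreover have "t < u (Max K + 1)"
    proof (rule ccontr)
      assume "\<not> t < u (Max K + 1)"
      then have "Max K + 1 \<in> K"
        using \<open>Max K < l\<close> by (auto simp: K_def)
      then show False
        using Max_ge[OF \<open>finite K\<close>] by fastforce
    qed
    ultimately show ?thesis
      by (intro that[of "Max K"]) (auto simp: K_def in_bin_def)
  qed
  then show ?thesis
    using separated by (metis linorder_neqE_nat)
qed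

lemma sum_xcode_bins:
  assumes l: "1 \<le> l" and mono: "mono_on {1..l} u" and C: "finite C"
    and range: "\<And>z w. (z, w) \<in> off_diag C \<Longrightarrow> u 1 \<le> \<tau> z w \<and> \<tau> z w \<le> b"
  shows "(\<Sum>i=1..l. xcode \<tau> u l b C i d) = (\<Sum>(z, w)\<in>off_diag C. \<tau> z w ^ d)"
proof -
  have one_bin: "(\<Sum>i=1..l. if in_bin u l b i t then g else 0) = g"
    if t: "u 1 \<le> t" "t \<le> b" for t g :: real
  proof -
    obtain i0 where i0: "i0 \<in> {1..l}" and bin: "\<And>i. i \<in> {1..l} \<Longrightarrow> in_bin u l b i t \<longleftrightarrow> i = i0"
      using ex1_in_bin[OF l mono t] by blast
    have "(\<Sum>i=1..l. if in_bin u l b i t then g else 0) = (\<Sum>i=1..l. if i = i0 then g else 0)"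
      using bin by (intro sum.cong) auto
    also have "\<dots> = g"
      using i0 by simp
    finally show ?thesis .
  qed
  have "(\<Sum>i=1..l. xcode \<tau> u l b C i d)
      = (\<Sum>(z, w)\<in>off_diag C. \<Sum>i=1..l. if in_bin u l b i (\<tau> z w) then \<tau> z w ^ d else 0)"
    unfolding xcode_eq_sum_off_diag[OF C] by (subst sum.swap) (simp add: case_prod_beta')
  also have "\<dots> = (\<Sum>(z, w)\<in>off_diag C. \<tau> z w ^ d)"
    using range one_bin by (intro sum.cong) auto
  finally show ?thesis .
qed

definition psd_kernel :: "('a \<Rightarrow> 'a \<Rightarrow> real) \<Rightarrow> bool" where
  "psd_kernel K \<longleftrightarrow> (\<forall>N (xs :: nat \<Rightarrow> 'a). inj_on xs {..<N} \<longrightarrow> psd N (\<lambda>i j. K (xs i) (xs j)))"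

lemma psd_kernel_sym:
  assumes "psd_kernel K"
  shows "K x y = K y x"
proof (cases "x = y")
  case False
  let ?xs = "\<lambda>i::nat. if i = 0 then x else y"
  have "inj_on ?xs {..<2}"
    using False by (auto simp: inj_on_def)
  then have "psd 2 (\<lambda>i j. K (?xs i) (?xs j))"
    using assms by (simp add: psd_kernel_def)
  then have "\<forall>i<2. \<forall>j<2. K (?xs i) (?xs j) = K (?xs j) (?xs i)"
    unfolding psd_def by blast
  from this[rule_format, of 0 1] show ?thesis
    by simp
qed simp

lemma psd_kernel_form_nonneg_on_set:
  assumes "psd_kernel K" and "finite P"
  shows "0 \<le> (\<Sum>x\<in>P. \<Sum>y\<in>P. V x * K x y * V y)"
proof -
  obtain xs where xs: "bij_betw xs {..<card P} P"
    using ex_bij_betw_nat_finite[OF \<open>finite P\<close>] by (auto simp: atLeast0LessThan)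
  then have "psd (card P) (\<lambda>i j. K (xs i) (xs j))"
    using assms(1) bij_betw_imp_inj_on[OF xs] by (simp add: psd_kernel_def)
  then have "0 \<le> (\<Sum>i<card P. \<Sum>j<card P. V (xs i) * K (xs i) (xs j) * V (xs j))"
    unfolding psd_def by (auto elim: allE[where x = "\<lambda>i. V (xs i)"])
  also have "\<dots> = (\<Sum>i<card P. \<Sum>y\<in>P. V (xs i) * K (xs i) y * V y)"
    by (intro sum.cong refl sum.reindex_bij_betw[OF xs])
  also have "\<dots> = (\<Sum>x\<in>P. \<Sum>y\<in>P. V x * K x y * V y)"
    by (rule sum.reindex_bij_betw[OF xs])
  finally show ?thesis .
qed

(* Points repeated in the family are merged by adding up their weights. *)
lemma psd_kernel_form_nonneg:
  assumes "psd_kernel K" and "finite I"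
  shows "0 \<le> (\<Sum>i\<in>I. \<Sum>j\<in>I. w i * K (pts i) (pts j) * w j)"
proof -
  define V where "V y = (\<Sum>i\<in>{i \<in> I. pts i = y}. w i)" for y
  have fibres: "(\<Sum>i\<in>I. F (pts i) * w i) = (\<Sum>y\<in>pts ` I. F y * V y)" for F :: "_ \<Rightarrow> real"
    unfolding V_def sum.image_gen[OF \<open>finite I\<close>, of _ pts]
    by (simp add: sum_distrib_left)
  have "(\<Sum>i\<in>I. \<Sum>j\<in>I. w i * K (pts i) (pts j) * w j)
      = (\<Sum>i\<in>I. (\<Sum>j\<in>I. K (pts i) (pts j) * w j) * w i)"
    by (simp add: sum_distrib_left sum_distrib_right mult_ac)
  also have "\<dots> = (\<Sum>i\<in>I. (\<Sum>y\<in>pts ` I. K (pts i) y * V y) * w i)"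
    by (simp add: fibres)
  also have "\<dots> = (\<Sum>x\<in>pts ` I. (\<Sum>y\<in>pts ` I. K x y * V y) * V x)"
    by (rule fibres)
  also have "\<dots> = (\<Sum>x\<in>pts ` I. \<Sum>y\<in>pts ` I. V x * K x y * V y)"
    by (simp add: sum_distrib_left sum_distrib_right mult_ac)
  finally show ?thesis
    using psd_kernel_form_nonneg_on_set[OF assms(1)] assms(2) by simp
qed

(* The quadratic form is that of K on q 0, ..., q (r - 1) and all points of C, where every
   point of C carries the weight v r. *)
lemma psd_kernel_bordered_psd:
  fixes K :: "'a \<Rightarrow> 'a \<Rightarrow> real"
  assumes K: "psd_kernel K" and C: "finite C"
  shows "psd (r + 1) (\<lambda>i j. if i < r \<and> j < r then K (q i) (q j)
            else if i < r then (\<Sum>z\<in>C. K (q i) z)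
            else if j < r then (\<Sum>z\<in>C. K (q j) z)
            else (\<Sum>z\<in>C. \<Sum>w\<in>C. K z w))" (is "psd _ ?M")
  unfolding psd_def
proof (intro conjI allI impI)
  fix i j
  show "?M i j = ?M j i"
    using psd_kernel_sym[OF K] by simp
next
  fix v :: "nat \<Rightarrow> real"
  define pts where "pts = case_sum q (\<lambda>z. z)"
  define W where "W = case_sum v (\<lambda>_ :: 'a. v r)"
  have "0 \<le> (\<Sum>a\<in>{..<r} <+> C. \<Sum>b\<in>{..<r} <+> C. W a * K (pts a) (pts b) * W b)"
    using C by (intro psd_kernel_form_nonneg[OF K]) auto
  also have "\<dots> = (\<Sum>i<r. (\<Sum>j<r. v i * K (q i) (q j) * v j) + (\<Sum>w\<in>C. v i * K (q i) w * v r))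
      + (\<Sum>z\<in>C. (\<Sum>j<r. v r * K z (q j) * v j) + (\<Sum>w\<in>C. v r * K z w * v r))"
    using C by (simp add: sum.Plus pts_def W_def)
  also have "\<dots> = (\<Sum>i<r. \<Sum>j<r. v i * K (q i) (q j) * v j)
      + (\<Sum>i<r. v i * (\<Sum>z\<in>C. K (q i) z) * v r) + (\<Sum>j<r. v r * (\<Sum>z\<in>C. K (q j) z) * v j)
      + v r * (\<Sum>z\<in>C. \<Sum>w\<in>C. K z w) * v r"
  proof -
    have "(\<Sum>z\<in>C. \<Sum>j<r. v r * K z (q j) * v j) = (\<Sum>j<r. \<Sum>z\<in>C. v r * K (q j) z * v j)"
      by (subst sum.swap) (simp only: psd_kernel_sym[OF K, of _ "q _"])
    then show ?thesis
      by (simp add: sum.distrib sum_distrib_left sum_distrib_right)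
  qed
  also have "\<dots> = (\<Sum>i<r + 1. \<Sum>j<r + 1. v i * ?M i j * v j)"
    by (simp add: sum.distrib)
  finally show "0 \<le> (\<Sum>i<r + 1. \<Sum>j<r + 1. v i * ?M i j * v j)" .
qed

lemma G_mat_code_psd:
  fixes \<tau> :: "'a \<Rightarrow> 'a \<Rightarrow> real"
  assumes K: "psd_kernel (\<lambda>s t. Phi p k (\<tau> s t))"
    and diag: "\<And>z. z \<in> C \<Longrightarrow> Phi p k (\<tau> z z) = 1"
    and C: "finite C"
    and x: "\<And>d. (\<Sum>i=1..l. x i d) = (\<Sum>(z, w)\<in>off_diag C. \<tau> z w ^ d)"
    and y: "\<And>i d. y i d = (\<Sum>z\<in>C. \<tau> z (q i) ^ d)"
  shows "psd (r + 1) (G_mat \<tau> p r q l (card C) x y k)"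
proof -
  let ?F = "\<lambda>s t. Phi p k (\<tau> s t)"
  have border: "(\<Sum>d\<le>k. p k d * y i d) = (\<Sum>z\<in>C. ?F (q i) z)" for i
  proof -
    have "(\<Sum>d\<le>k. p k d * y i d) = (\<Sum>z\<in>C. ?F z (q i))"
      unfolding y Phi_def by (simp add: sum_distrib_left sum.swap[of _ C])
    then show ?thesis
      using psd_kernel_sym[OF K] by simp
  qed
  have "(\<Sum>d\<le>k. p k d * (\<Sum>i=1..l. x i d)) = (\<Sum>(z, w)\<in>off_diag C. ?F z w)"
    unfolding x Phi_def by (simp add: sum_distrib_left sum.swap[of _ "off_diag C"] case_prod_beta')
  also have "\<dots> = (\<Sum>z\<in>C. \<Sum>w\<in>C - {z}. ?F z w)"
    using C by (simp add: off_diag_eq_Sigma sum.Sigma)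
  finally have corner: "card C + (\<Sum>d\<le>k. p k d * (\<Sum>i=1..l. x i d)) = (\<Sum>z\<in>C. \<Sum>w\<in>C. ?F z w)"
    using C diag by (simp add: sum.remove sum.distrib)
  have "G_mat \<tau> p r q l (card C) x y k = (\<lambda>i j.
      if i < r \<and> j < r then ?F (q (Suc i)) (q (Suc j))
      else if i < r then (\<Sum>z\<in>C. ?F (q (Suc i)) z)
      else if j < r then (\<Sum>z\<in>C. ?F (q (Suc j)) z)
      else (\<Sum>z\<in>C. \<Sum>w\<in>C. ?F z w))"
    unfolding G_mat_def border corner ..
  then show ?thesis
    using psd_kernel_bordered_psd[OF K C, of r "\<lambda>i. q (Suc i)"] by simp
qed

theorem theorem7p2:
  fixes \<tau> :: "'a \<Rightarrow> 'a \<Rightarrow> real" and \<tau>0 :: real and p :: "nat \<Rightarrow> nat \<Rightarrow> real"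
    and a b :: real and m r l :: nat and q :: "nat \<Rightarrow> 'a"
    and \<alpha> \<beta> :: "nat \<Rightarrow> ereal" and \<Pi> :: "'a set" and u :: "nat \<Rightarrow> real"
    and Acon :: "real \<Rightarrow> (nat \<Rightarrow> nat \<Rightarrow> real) \<Rightarrow> bool"
  assumes tau_sym: "\<And>x y. \<tau> x y = \<tau> y x"
    and tau0: "\<And>x. \<tau> x x = \<tau>0"
    and deg: "\<And>k. p k k \<noteq> 0"
    and Phi_norm: "\<And>k. Phi p k \<tau>0 = 1"
    and Phi_psd: "\<And>k N (xs :: nat \<Rightarrow> 'a). inj_on xs {..<N} \<Longrightarrow>
                    psd N (\<lambda>i j. Phi p k (\<tau> (xs i) (xs j)))"
    and ab: "a < b"
    and m: "1 \<le> m"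
    and \<alpha>\<beta>: "\<And>i. i \<in> {1..r} \<Longrightarrow> \<alpha> i \<le> \<beta> i"
    and \<Pi>: "\<Pi> \<subseteq> {x. \<forall>i\<in>{1..r}. \<alpha> i \<le> ereal (\<tau> x (q i)) \<and> ereal (\<tau> x (q i)) \<le> \<beta> i}"
    and u1: "u 1 = a" and ul: "u (l + 1) = b"
    and u_mono: "strict_mono_on {1..l + 1} u"
    and Acon: "\<And>C. S_code \<tau> ({t. \<exists>x y. t = \<tau> x y} \<inter> {a..b}) C \<Longrightarrow> C \<subseteq> \<Pi> \<Longrightarrow>
                 Acon (real (card C)) (restr l m (xcode \<tau> u l b C))"
  shows "A_max \<tau> \<Pi> ({t. \<exists>x y. t = \<tau> x y} \<inter> {a..b}) \<le> c_star \<tau> p r q \<alpha> \<beta> l u Acon m"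
proof -
  let ?S = "{t. \<exists>x y. t = \<tau> x y} \<inter> {a..b}"
  have l: "1 \<le> l"
    using u1 ul ab by (cases l) auto
  have mono: "mono_on {1..l} u"
    using strict_mono_on_imp_mono_on[OF u_mono] by (rule mono_on_subset) auto
  have kernel: "psd_kernel (\<lambda>s t. Phi p k (\<tau> s t))" for k
    using Phi_psd by (simp add: psd_kernel_def)
  have "feasible \<tau> p r q \<alpha> \<beta> l u Acon m (card C) (xcode \<tau> u l b C) (\<lambda>i d. \<Sum>z\<in>C. \<tau> z (q i) ^ d)"
    if code: "S_code \<tau> ?S C" and sub: "C \<subseteq> \<Pi>" for C
  proof -
    have C: "finite C"
      using code by (simp add: S_code_def)
    have "u 1 \<le> \<tau> z w \<and> \<tau> z w \<le> b" if "(z, w) \<in> off_diag C" for z w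
      using code that u1 by (auto simp: S_code_def off_diag_def)
    note sum_x = sum_xcode_bins[OF l mono C this]
    have "H_psd m (xcode \<tau> u l b C i) (ereal (u i)) (ereal (u (i + 1)))" if "i \<in> {1..l}" for i
      using that ul by (rule H_psd_xcode)
    moreover have "H_psd m (\<lambda>d. \<Sum>z\<in>C. \<tau> z (q i) ^ d) (\<alpha> i) (\<beta> i)" if "i \<in> {1..r}" for i
      using sub \<Pi> that by (intro H_psd_moments) auto
    ultimately show ?thesis
      unfolding feasible_def
      using Acon[OF code sub] G_mat_code_psd[OF kernel _ C sum_x] tau0 Phi_norm
      by auto
  qed
  then show ?thesis
    unfolding A_max_def c_star_def by (intro Sup_subset_mono) blast
qed

end
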